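(* Let $k\ge 1$ and let $G$ be an $\mathcal{O}_k$-free graph of minimum degree at least 2. If $x$ is a vertex of degree $d$ in $G$, then $r(G)-r(G-x)\ge \frac{d-k+1}{2}$.
   Context: All graphs are finite and simple. The cycle rank of a graph $G$ is $r(G)=|E(G)|-|V(G)|+|\mathcal{C}(G)|$, where $\mathcal{C}(G)$ is the set of connected components of $G$. Two vertex-disjoint subgraphs are independent if there is no edge between them. A graph $G$ is $\mathcal{O}_k$-free if it does not contain $k$ pairwise vertex-disjoint and pairwise independent cycles; equivalently, $G$ has no induced subgraph isomorphic to a disjoint union of $k$ cycles. *)

theory Defs
  imports Complex_Main
begin

definition graph :: "'a set \<Rightarrow> 'a set set \<Rightarrow> bool" where
  "graph V E \<longleftrightarrow> finite V \<and> (\<forall>e\<in>E. e \<subseteq> V \<and> card e = 2)"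

definition degree :: "'a set set \<Rightarrow> 'a \<Rightarrow> nat" where
  "degree E v = card {e\<in>E. v \<in> e}"

definition adj_rel :: "'a set set \<Rightarrow> ('a \<times> 'a) set" where
  "adj_rel E = {(u,v). {u,v} \<in> E}"

definition components :: "'a set \<Rightarrow> 'a set set \<Rightarrow> 'a set set" where
  "components V E = (\<lambda>v. {u\<in>V. (v,u) \<in> (adj_rel E)\<^sup>*}) ` V"

definition cycle_rank :: "'a set \<Rightarrow> 'a set set \<Rightarrow> int" where
  "cycle_rank V E = int (card E) - int (card V) + int (card (components V E))"

definition del_vertex_V :: "'a set \<Rightarrow> 'a \<Rightarrow> 'a set" where
  "del_vertex_V V x = V - {x}"
definition del_vertex_E :: "'a set set \<Rightarrow> 'a \<Rightarrow> 'a set set" where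
  "del_vertex_E E x = {e\<in>E. x \<notin> e}"

definition is_cycle :: "'a set set \<Rightarrow> 'a set \<Rightarrow> bool" where
  "is_cycle E C \<longleftrightarrow> (\<exists>xs. distinct xs \<and> length xs \<ge> 3 \<and> set xs = C \<and>
     (\<forall>i. Suc i < length xs \<longrightarrow> {xs ! i, xs ! Suc i} \<in> E) \<and> {last xs, hd xs} \<in> E)"

definition Ok_free :: "nat \<Rightarrow> 'a set \<Rightarrow> 'a set set \<Rightarrow> bool" where
  "Ok_free k V E \<longleftrightarrow> \<not> (\<exists>Cs :: nat \<Rightarrow> 'a set.
      (\<forall>i<k. Cs i \<subseteq> V \<and> is_cycle E (Cs i)) \<and>
      (\<forall>i<k. \<forall>j<k. i \<noteq> j \<longrightarrow> Cs i \<inter> Cs j = {} \<and> (\<forall>u\<in>Cs i. \<forall>v\<in>Cs j. {u,v} \<notin> E)))"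

end

theory Submission
  imports Defs
begin

text \<open>
  Deleting x removes its d edges and one vertex, so r(G) - r(G - x) = d - 1 + c(G) - c(G - x).
  A component of G - x that contains no neighbour of x is still a component of G, and so is the
  component of x; hence the difference is at least d - m, where m counts the components of G - x
  meeting N(x). Such a component receiving exactly one edge from x has all degrees at least 2
  except for one vertex of degree at least 1, so it contains a cycle; distinct components of
  G - x are independent in G, so O_k-freeness allows fewer than k of them. Every other one receives
  at least two of the d edges, whence 2m \<le> d + k - 1.
\<close>

definition neighbours :: "'a set set \<Rightarrow> 'a \<Rightarrow> 'a set" where
  "neighbours E v = {w. {v, w} \<in> E}"

definition walk :: "'a set set \<Rightarrow> 'a list \<Rightarrow> bool" where
  "walk E p \<longleftrightarrow> (\<forall>i. Suc i < length p \<longrightarrow> {p ! i, p ! Suc i} \<in> E)"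

lemma degree_eq_card_neighbours:
  assumes "\<forall>e\<in>E. card e = 2"
  shows "degree E v = card (neighbours E v)"
proof -
  have "{e\<in>E. v \<in> e} = (\<lambda>w. {v, w}) ` neighbours E v"
  proof (intro equalityI subsetI)
    fix e assume e: "e \<in> {e\<in>E. v \<in> e}"
    then have "card e = 2" using assms by blast
    then obtain a b where ab: "e = {a, b}" unfolding card_2_iff by blast
    have "e = {v, if a = v then b else a}" using e unfolding ab by auto
    then show "e \<in> (\<lambda>w. {v, w}) ` neighbours E v"
      using e unfolding neighbours_def by auto
  next
    fix e assume "e \<in> (\<lambda>w. {v, w}) ` neighbours E v"
    then show "e \<in> {e\<in>E. v \<in> e}" unfolding neighbours_def by auto
  qed
  moreover have "inj_on (\<lambda>w. {v, w}) (neighbours E v)"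
    by (rule inj_onI) (auto simp: doubleton_eq_iff)
  ultimately show ?thesis by (simp add: degree_def card_image)
qed

lemma mem_neighbours_commute: "w \<in> neighbours E v \<longleftrightarrow> v \<in> neighbours E w"
  by (simp add: neighbours_def insert_commute)

lemma neighbours_subset:
  "graph V E \<Longrightarrow> neighbours E v \<subseteq> V"
  by (auto simp: graph_def neighbours_def)

lemma finite_neighbours:
  "graph V E \<Longrightarrow> finite (neighbours E v)"
  by (meson finite_subset graph_def neighbours_subset)

lemma not_in_neighbours_self:
  "graph V E \<Longrightarrow> v \<notin> neighbours E v"
  by (auto simp: graph_def neighbours_def)

lemma walk_Cons:
  "walk E (w # p) \<longleftrightarrow> (p = [] \<or> {w, hd p} \<in> E) \<and> walk E p"
  unfolding walk_def by (cases p) (auto simp: less_Suc_eq_0_disj)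

lemma is_cycle_iff_closed_walk:
  "is_cycle E C \<longleftrightarrow> (\<exists>p. distinct p \<and> 3 \<le> length p \<and> set p = C \<and> walk E p \<and> {last p, hd p} \<in> E)"
  by (simp add: is_cycle_def walk_def)

lemma is_cycle_walk_take:
  assumes "distinct p" "walk E p" "2 \<le> j" "j < length p" "{p ! j, hd p} \<in> E"
  shows "is_cycle E (set (take (Suc j) p))"
  unfolding is_cycle_iff_closed_walk
proof (intro exI conjI)
  let ?c = "take (Suc j) p"
  show "walk E ?c" using assms(2) unfolding walk_def by (metis Suc_lessD length_take min_less_iff_conj nth_take)
  have "last ?c = p ! j" using assms(4) by (simp add: take_Suc_conv_app_nth)
  moreover have "hd ?c = hd p" by simp
  ultimately show "{last ?c, hd ?c} \<in> E" using assms(5) by simp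
  show "distinct ?c" using assms(1) by simp
  have "length ?c = Suc j" using assms(4) by simp
  then show "3 \<le> length ?c" using assms(3) by linarith
  show "set ?c = set ?c" by (rule refl)
qed

lemma cycle_if_walk_head_has_two_neighbours:
  assumes "graph V E" "distinct p" "walk E p" "2 \<le> card (neighbours E (hd p) \<inter> set p)"
  shows "\<exists>C\<subseteq>set p. is_cycle E C"
proof -
  let ?S = "neighbours E (hd p) \<inter> set p"
  obtain a b where "a \<in> ?S" "b \<in> ?S" "a \<noteq> b"
    using assms(4) card_le_Suc0_iff_eq[of ?S] by fastforce
  then obtain w where w: "w \<in> neighbours E (hd p)" "w \<in> set p" "w \<noteq> p ! 1"
    by (metis IntE)
  then obtain j where j: "j < length p" "p ! j = w" by (meson in_set_conv_nth)
  have "j \<noteq> 0"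
    using j w(1) not_in_neighbours_self[OF assms(1)] by (metis hd_conv_nth list.size(3) not_less0)
  moreover have "j \<noteq> 1" using j w(3) by auto
  ultimately have "2 \<le> j" by linarith
  moreover have "{p ! j, hd p} \<in> E" using j w(1) by (simp add: neighbours_def insert_commute)
  ultimately have "is_cycle E (set (take (Suc j) p))"
    using is_cycle_walk_take assms(2,3) j(1) by blast
  then show ?thesis by (meson set_take_subset)
qed

lemma subset_contains_cycle:
  assumes G: "graph V E" and W: "W \<subseteq> V" and v0: "v0 \<in> W" "neighbours E v0 \<inter> W \<noteq> {}"
    and deg: "\<forall>v\<in>W - {v0}. 2 \<le> card (neighbours E v \<inter> W)"
  shows "\<exists>C\<subseteq>W. is_cycle E C"
proof -
  have "finite W" using G W finite_subset unfolding graph_def by blast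
  \<comment> \<open>Grow a path ending at v0 at its head; once all neighbours of the head lie on the path,
    the head closes a cycle.\<close>
  have grow: "\<exists>C\<subseteq>W. is_cycle E C"
    if "distinct p" "walk E p" "set p \<subseteq> W" "p \<noteq> []" "last p = v0" for p
    using that
  proof (induction "card W - length p" arbitrary: p rule: less_induct)
    case less
    let ?u = "hd p"
    show ?case
    proof (cases "neighbours E ?u \<inter> W \<subseteq> set p")
      case False
      then obtain w where w: "w \<in> neighbours E ?u" "w \<in> W" "w \<notin> set p" by blast
      have "walk E (w # p)"
        using less.prems(2) w(1) by (simp add: walk_Cons neighbours_def insert_commute)
      moreover have "distinct (w # p)" "set (w # p) \<subseteq> W" using less.prems(1,3) w(2,3) by auto
      moreover from this have "length (w # p) \<le> card W"
        using \<open>finite W\<close> by (metis card_mono distinct_card)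
      ultimately show ?thesis
        using less.hyps[of "w # p"] less.prems w by simp
    next
      case True
      have "?u \<noteq> v0"
      proof
        assume "?u = v0"
        have "tl p = []"
        proof (rule ccontr)
          assume "tl p \<noteq> []"
          then have "last p \<in> set (tl p)" by (cases p) auto
          with \<open>?u = v0\<close> less.prems(1,4,5) show False by (cases p) auto
        qed
        with less.prems(4) \<open>?u = v0\<close> have "set p = {v0}" by (cases p) auto
        with True v0(2) \<open>?u = v0\<close> show False using not_in_neighbours_self[OF G] by auto
      qed
      moreover have "?u \<in> W" using less.prems(3,4) by auto
      moreover have "neighbours E ?u \<inter> set p = neighbours E ?u \<inter> W" using True less.prems(3) by blast
      ultimately have "2 \<le> card (neighbours E ?u \<inter> set p)" using deg by simp
      then show ?thesis
        using cycle_if_walk_head_has_two_neighbours[OF G less.prems(1,2)] less.prems(3) by blast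
    qed
  qed
  show ?thesis using grow[of "[v0]"] v0(1) by (simp add: walk_def)
qed

definition component :: "'a set \<Rightarrow> 'a set set \<Rightarrow> 'a \<Rightarrow> 'a set" where
  "component V E v = {u\<in>V. (v, u) \<in> (adj_rel E)\<^sup>*}"

lemma components_eq_image_component: "components V E = component V E ` V"
  by (simp add: components_def component_def)

lemma finite_components: "finite V \<Longrightarrow> finite (components V E)"
  by (simp add: components_eq_image_component)

lemma mem_components_subset: "K \<in> components V E \<Longrightarrow> K \<subseteq> V"
  by (auto simp: components_eq_image_component component_def)

lemma sym_adj_rel: "sym (adj_rel E)"
  by (auto simp: sym_def adj_rel_def insert_commute)

lemma self_in_component: "v \<in> V \<Longrightarrow> v \<in> component V E v"
  by (simp add: component_def)

lemma component_eq_if_reachable: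
  assumes "(u, v) \<in> (adj_rel E)\<^sup>*"
  shows "component V E u = component V E v"
proof -
  have "(v, u) \<in> (adj_rel E)\<^sup>*" by (rule symD[OF sym_rtrancl[OF sym_adj_rel] assms])
  with assms show ?thesis unfolding component_def by (auto intro: rtrancl_trans)
qed

lemma mem_components_eq_component:
  assumes "K \<in> components V E" "u \<in> K"
  shows "K = component V E u"
proof -
  obtain v where v: "K = component V E v" using assms(1) by (auto simp: components_eq_image_component)
  with assms(2) have "(v, u) \<in> (adj_rel E)\<^sup>*" by (simp add: component_def)
  with v show ?thesis by (simp add: component_eq_if_reachable)
qed

lemma components_eq_if_adjacent:
  assumes "K1 \<in> components V E" "K2 \<in> components V E" "u \<in> K1" "w \<in> K2" "{u, w} \<in> E"
  shows "K1 = K2"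
proof -
  have "(u, w) \<in> (adj_rel E)\<^sup>*" using assms(5) by (auto simp: adj_rel_def)
  then have "component V E u = component V E w" by (rule component_eq_if_reachable)
  with mem_components_eq_component[OF assms(1,3)] mem_components_eq_component[OF assms(2,4)]
  show ?thesis by simp
qed

lemma components_disjoint:
  "K1 \<in> components V E \<Longrightarrow> K2 \<in> components V E \<Longrightarrow> K1 \<noteq> K2 \<Longrightarrow> K1 \<inter> K2 = {}"
  by (metis disjoint_iff mem_components_eq_component)

lemma notin_components_del_vertex:
  "K \<in> components (del_vertex_V V x) (del_vertex_E E x) \<Longrightarrow> x \<notin> K"
  using mem_components_subset by (fastforce simp: del_vertex_V_def)

lemma components_del_vertex_independent:
  assumes "K1 \<in> components (del_vertex_V V x) (del_vertex_E E x)"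
    and "K2 \<in> components (del_vertex_V V x) (del_vertex_E E x)"
    and "K1 \<noteq> K2" "u \<in> K1" "w \<in> K2"
  shows "{u, w} \<notin> E"
proof
  assume "{u, w} \<in> E"
  moreover have "u \<noteq> x" "w \<noteq> x" using assms notin_components_del_vertex by metis+
  ultimately have "{u, w} \<in> del_vertex_E E x" by (simp add: del_vertex_E_def)
  with assms show False using components_eq_if_adjacent by metis
qed

lemma neighbour_mem_component_del_vertex:
  assumes G: "graph V E" and K: "K \<in> components (del_vertex_V V x) (del_vertex_E E x)"
    and "v \<in> K" "w \<in> neighbours E v" "w \<noteq> x"
  shows "w \<in> K"
proof -
  have "w \<in> del_vertex_V V x"
    using assms(4,5) neighbours_subset[OF G] by (auto simp: del_vertex_V_def)
  moreover have "{v, w} \<in> del_vertex_E E x"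
    using assms(3-5) notin_components_del_vertex[OF K] by (auto simp: neighbours_def del_vertex_E_def)
  then have "(v, w) \<in> (adj_rel (del_vertex_E E x))\<^sup>*" by (auto simp: adj_rel_def)
  ultimately show ?thesis
    using mem_components_eq_component[OF K assms(3)] by (simp add: component_def)
qed

lemma mem_components_if_avoids_neighbours:
  assumes G: "graph V E" and K: "K \<in> components (del_vertex_V V x) (del_vertex_E E x)"
    and avoid: "K \<inter> neighbours E x = {}"
  shows "K \<in> components V E"
proof -
  obtain v where v: "v \<in> del_vertex_V V x" and Kv: "K = component (del_vertex_V V x) (del_vertex_E E x) v"
    using K by (auto simp: components_eq_image_component)
  have "component V E v \<subseteq> K"
  proof
    fix u assume "u \<in> component V E v"
    then have "(v, u) \<in> (adj_rel E)\<^sup>*" by (simp add: component_def)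
    then show "u \<in> K"
    proof (induction rule: rtrancl_induct)
      case base
      then show ?case using v Kv by (simp add: self_in_component)
    next
      case (step w u)
      then have "u \<in> neighbours E w" by (simp add: adj_rel_def neighbours_def)
      moreover have "u \<noteq> x" using step.IH avoid \<open>u \<in> neighbours E w\<close> mem_neighbours_commute by fastforce
      ultimately show ?case using neighbour_mem_component_del_vertex[OF G K step.IH] by blast
    qed
  qed
  moreover have "K \<subseteq> component V E v"
  proof -
    have "adj_rel (del_vertex_E E x) \<subseteq> adj_rel E" by (auto simp: adj_rel_def del_vertex_E_def)
    then show ?thesis
      unfolding Kv component_def del_vertex_V_def using rtrancl_mono by blast
  qed
  ultimately have "K = component V E v" by blast
  with v show ?thesis by (auto simp: components_eq_image_component del_vertex_V_def)
qed

lemma card_components_del_vertex_avoiding_neighbours_less: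
  assumes G: "graph V E" and x: "x \<in> V"
  shows "card {K \<in> components (del_vertex_V V x) (del_vertex_E E x). K \<inter> neighbours E x = {}}
           < card (components V E)"
proof (rule psubset_card_mono)
  show "finite (components V E)" using G by (simp add: graph_def finite_components)
  have "component V E x \<in> components V E" "x \<in> component V E x"
    using x by (auto simp: components_eq_image_component self_in_component)
  moreover have "K \<in> components V E - {component V E x}"
    if "K \<in> components (del_vertex_V V x) (del_vertex_E E x)" "K \<inter> neighbours E x = {}" for K
    using mem_components_if_avoids_neighbours[OF G that] notin_components_del_vertex[OF that(1)]
      \<open>x \<in> component V E x\<close> by blast
  ultimately show "{K \<in> components (del_vertex_V V x) (del_vertex_E E x). K \<inter> neighbours E x = {}}
      \<subset> components V E" by auto
qed

lemma cycle_rank_del_vertex: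
  assumes G: "graph V E" and x: "x \<in> V"
  shows "cycle_rank V E - cycle_rank (del_vertex_V V x) (del_vertex_E E x)
    = int (degree E x) - 1 + int (card (components V E))
      - int (card (components (del_vertex_V V x) (del_vertex_E E x)))"
proof -
  have "finite V" using G by (simp add: graph_def)
  then have "finite E" using G unfolding graph_def by (meson Pow_iff finite_Pow_iff finite_subset subsetI)
  have split: "E = del_vertex_E E x \<union> {e\<in>E. x \<in> e}" by (auto simp: del_vertex_E_def)
  have "card (del_vertex_E E x \<union> {e\<in>E. x \<in> e}) = card (del_vertex_E E x) + card {e\<in>E. x \<in> e}"
    by (rule card_Un_disjoint) (use \<open>finite E\<close> in \<open>auto simp: del_vertex_E_def\<close>)
  then have "card E = card (del_vertex_E E x) + degree E x" by (simp only: split[symmetric] degree_def)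
  moreover have "card V = card (del_vertex_V V x) + 1"
    using card_Suc_Diff1[OF \<open>finite V\<close> x] by (simp add: del_vertex_V_def)
  ultimately show ?thesis by (simp add: cycle_rank_def)
qed

lemma cycle_in_component_del_vertex:
  assumes G: "graph V E" and deg: "\<forall>v\<in>V. 2 \<le> degree E v"
    and K: "K \<in> components (del_vertex_V V x) (del_vertex_E E x)"
    and v0: "K \<inter> neighbours E x = {v0}"
  shows "\<exists>C\<subseteq>K. is_cycle E C"
proof (rule subset_contains_cycle[OF G])
  have KV: "K \<subseteq> V" using mem_components_subset[OF K] by (auto simp: del_vertex_V_def)
  have NK: "neighbours E v \<inter> K = neighbours E v - {x}" if "v \<in> K" for v
    using neighbour_mem_component_del_vertex[OF G K that] notin_components_del_vertex[OF K] by auto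
  have E2: "\<forall>e\<in>E. card e = 2" using G by (simp add: graph_def)
  have card_N: "2 \<le> card (neighbours E v)" if "v \<in> K" for v
    using deg subsetD[OF KV that] by (simp add: degree_eq_card_neighbours[OF E2])
  show "K \<subseteq> V" by (fact KV)
  show "v0 \<in> K" using v0 by blast
  have "card (neighbours E v0 - {x}) \<noteq> 0"
    using card_N[OF \<open>v0 \<in> K\<close>] finite_neighbours[OF G] by (simp add: card_Diff_singleton_if)
  then show "neighbours E v0 \<inter> K \<noteq> {}" using NK[OF \<open>v0 \<in> K\<close>] by (metis card.empty)
  show "\<forall>v\<in>K - {v0}. 2 \<le> card (neighbours E v \<inter> K)"
  proof
    fix v assume v: "v \<in> K - {v0}"
    have "x \<notin> neighbours E v"
    proof
      assume "x \<in> neighbours E v"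
      then have "v \<in> K \<inter> neighbours E x" using v mem_neighbours_commute[of x E v] by blast
      with v v0 show False by blast
    qed
    then have "neighbours E v \<inter> K = neighbours E v" using NK v by auto
    then show "2 \<le> card (neighbours E v \<inter> K)" using card_N v by simp
  qed
qed

lemma card_less_if_Ok_free:
  assumes free: "Ok_free k V E" and fin: "finite \<K>"
    and cyc: "\<forall>K\<in>\<K>. K \<subseteq> V \<and> (\<exists>C\<subseteq>K. is_cycle E C)"
    and indep: "\<forall>K1\<in>\<K>. \<forall>K2\<in>\<K>. K1 \<noteq> K2 \<longrightarrow> K1 \<inter> K2 = {} \<and> (\<forall>u\<in>K1. \<forall>w\<in>K2. {u, w} \<notin> E)"
  shows "card \<K> < k"
proof (rule ccontr)
  assume "\<not> card \<K> < k"
  obtain C where C: "\<forall>K\<in>\<K>. C K \<subseteq> K \<and> is_cycle E (C K)" using cyc by metis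
  obtain h where h: "bij_betw h {0..<card \<K>} \<K>" using ex_bij_betw_nat_finite[OF fin] by blast
  have hk: "h i \<in> \<K>" if "i < k" for i
    using h that \<open>\<not> card \<K> < k\<close> by (auto simp: bij_betw_def)
  have hinj: "h i \<noteq> h j" if "i < k" "j < k" "i \<noteq> j" for i j
    using h that \<open>\<not> card \<K> < k\<close> by (auto simp: bij_betw_def inj_on_def)
  have "\<exists>Cs :: nat \<Rightarrow> 'a set. (\<forall>i<k. Cs i \<subseteq> V \<and> is_cycle E (Cs i)) \<and>
      (\<forall>i<k. \<forall>j<k. i \<noteq> j \<longrightarrow> Cs i \<inter> Cs j = {} \<and> (\<forall>u\<in>Cs i. \<forall>w\<in>Cs j. {u, w} \<notin> E))"
  proof (intro exI conjI allI impI)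
    fix i assume i: "i < k"
    show "C (h i) \<subseteq> V" "is_cycle E (C (h i))" using C cyc hk[OF i] by blast+
    fix j assume j: "j < k" and ij: "i \<noteq> j"
    have "C (h i) \<subseteq> h i" "C (h j) \<subseteq> h j" using C hk i j by blast+
    moreover have "h i \<inter> h j = {}" "\<forall>u\<in>h i. \<forall>w\<in>h j. {u, w} \<notin> E"
      using indep[rule_format, OF hk[OF i] hk[OF j] hinj[OF i j ij]] by blast+
    ultimately show "C (h i) \<inter> C (h j) = {}" "\<forall>u\<in>C (h i). \<forall>w\<in>C (h j). {u, w} \<notin> E"
      by blast+
  qed
  with free show False unfolding Ok_free_def by blast
qed

lemma two_card_le_sum_plus_card_eq_1:
  fixes f :: "'a \<Rightarrow> nat"
  assumes "finite M" "\<forall>K\<in>M. 1 \<le> f K"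
  shows "2 * card M \<le> sum f M + card {K\<in>M. f K = 1}"
proof -
  have "card {K\<in>M. f K = 1} = (\<Sum>K\<in>M. if f K = 1 then 1 else 0)"
    using assms(1) by (simp add: sum.inter_filter[symmetric])
  moreover have "(\<Sum>K\<in>M. 2) \<le> (\<Sum>K\<in>M. f K + (if f K = 1 then 1 else 0))"
    by (rule sum_mono) (use assms(2) in fastforce)
  ultimately show ?thesis by (simp add: sum.distrib)
qed

lemma sum_card_Int_le_card:
  assumes "finite \<K>" "finite N" "\<forall>K1\<in>\<K>. \<forall>K2\<in>\<K>. K1 \<noteq> K2 \<longrightarrow> K1 \<inter> K2 = {}"
  shows "(\<Sum>K\<in>\<K>. card (K \<inter> N)) \<le> card N"
proof -
  have "(\<Sum>K\<in>\<K>. card (K \<inter> N)) = card (\<Union>K\<in>\<K>. K \<inter> N)"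
    using assms by (subst card_UN_disjoint) auto
  also have "\<dots> \<le> card N" using assms(2) by (intro card_mono) auto
  finally show ?thesis .
qed

lemma card_components_del_vertex_meeting_neighbours_less:
  assumes G: "graph V E" and deg: "\<forall>v\<in>V. 2 \<le> degree E v" and free: "Ok_free k V E"
  shows "2 * card {K \<in> components (del_vertex_V V x) (del_vertex_E E x). K \<inter> neighbours E x \<noteq> {}}
           < degree E x + k"
proof -
  let ?N = "neighbours E x"
  define Ks where "Ks = components (del_vertex_V V x) (del_vertex_E E x)"
  define M where "M = {K\<in>Ks. K \<inter> ?N \<noteq> {}}"
  define A where "A = {K\<in>M. card (K \<inter> ?N) = 1}"
  have "finite M" using G by (simp add: M_def Ks_def graph_def del_vertex_V_def finite_components)
  have "A \<subseteq> Ks" "M \<subseteq> Ks" by (auto simp: A_def M_def)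
  have disj: "\<forall>K1\<in>Ks. \<forall>K2\<in>Ks. K1 \<noteq> K2 \<longrightarrow> K1 \<inter> K2 = {}"
    unfolding Ks_def using components_disjoint by blast
  have "(\<Sum>K\<in>M. card (K \<inter> ?N)) \<le> card ?N"
    using sum_card_Int_le_card[OF \<open>finite M\<close> finite_neighbours[OF G]] disj \<open>M \<subseteq> Ks\<close> by blast
  also have "\<dots> = degree E x" using G by (simp add: degree_eq_card_neighbours graph_def)
  finally have "2 * card M \<le> degree E x + card A"
    using two_card_le_sum_plus_card_eq_1[OF \<open>finite M\<close>, of "\<lambda>K. card (K \<inter> ?N)"]
      finite_neighbours[OF G] by (auto simp: A_def M_def card_gt_0_iff Suc_le_eq)
  moreover have "card A < k"
  proof (rule card_less_if_Ok_free[OF free])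
    show "finite A" using \<open>finite M\<close> by (simp add: A_def)
    have "K \<subseteq> V" if "K \<in> Ks" for K
      using mem_components_subset[OF that[unfolded Ks_def]] by (auto simp: del_vertex_V_def)
    then show "\<forall>K\<in>A. K \<subseteq> V \<and> (\<exists>C\<subseteq>K. is_cycle E C)"
      using cycle_in_component_del_vertex[OF G deg] \<open>A \<subseteq> Ks\<close>
      by (auto simp: A_def M_def Ks_def card_1_singleton_iff)
    show "\<forall>K1\<in>A. \<forall>K2\<in>A. K1 \<noteq> K2 \<longrightarrow> K1 \<inter> K2 = {} \<and> (\<forall>u\<in>K1. \<forall>w\<in>K2. {u, w} \<notin> E)"
    proof (intro ballI impI conjI)
      fix K1 K2 assume "K1 \<in> A" "K2 \<in> A" "K1 \<noteq> K2"
      with \<open>A \<subseteq> Ks\<close> have K: "K1 \<in> Ks" "K2 \<in> Ks" "K1 \<noteq> K2" by auto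
      then show "K1 \<inter> K2 = {}" using disj by blast
      fix u w assume "u \<in> K1" "w \<in> K2"
      with K show "{u, w} \<notin> E" unfolding Ks_def by (rule components_del_vertex_independent)
    qed
  qed
  ultimately show ?thesis by (simp add: M_def Ks_def)
qed

theorem mainTheorem13:
  fixes V :: "'a set" and E :: "'a set set" and k :: nat and x :: 'a
  assumes "graph V E"
    and "k \<ge> 1"
    and "Ok_free k V E"
    and "\<forall>v\<in>V. degree E v \<ge> 2"
    and "x \<in> V"
  shows "real_of_int (cycle_rank V E - cycle_rank (del_vertex_V V x) (del_vertex_E E x))
           \<ge> (real (degree E x) - real k + 1) / 2"
proof -
  let ?N = "neighbours E x"
  define Ks where "Ks = components (del_vertex_V V x) (del_vertex_E E x)"
  define M where "M = {K\<in>Ks. K \<inter> ?N \<noteq> {}}"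
  have "finite Ks" using assms(1) by (simp add: Ks_def graph_def del_vertex_V_def finite_components)
  moreover have "M \<subseteq> Ks" "Ks - M = {K\<in>Ks. K \<inter> ?N = {}}" by (auto simp: M_def)
  ultimately have "card Ks = card M + card {K\<in>Ks. K \<inter> ?N = {}}"
    by (metis card_Diff_subset card_mono le_add_diff_inverse finite_subset)
  moreover have "card {K\<in>Ks. K \<inter> ?N = {}} < card (components V E)"
    unfolding Ks_def by (rule card_components_del_vertex_avoiding_neighbours_less[OF assms(1,5)])
  moreover have "2 * card M < degree E x + k"
    unfolding M_def Ks_def by (rule card_components_del_vertex_meeting_neighbours_less[OF assms(1,4,3)])
  moreover have "cycle_rank V E - cycle_rank (del_vertex_V V x) (del_vertex_E E x)
      = int (degree E x) - 1 + int (card (components V E)) - int (card Ks)"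
    unfolding Ks_def by (rule cycle_rank_del_vertex[OF assms(1,5)])
  ultimately have "int (degree E x) - int k + 1
      \<le> 2 * (cycle_rank V E - cycle_rank (del_vertex_V V x) (del_vertex_E E x))" by presburger
  then show ?thesis by (simp add: field_simps flip: of_int_le_iff)
qed

end
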